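(* Let $\Psi$ be an $n\times n$ complex matrix whose spectrum lies in the open unit disk $\mathcal{D}$. Let $B$ be a Blaschke product of degree at most $n-1$ that maximizes $\|\hat B(\Psi)\|$ over all Blaschke products $\hat B$ of degree at most $n-1$, and assume $\|B(\Psi)\|>1$. If $v_1$ is a right singular vector of $B(\Psi)$ corresponding to the largest singular value $\sigma_1$, then $\langle B(\Psi)v_1,v_1\rangle=0$.
   Context: A Blaschke product of degree at most $n-1$ is a function $B(z)=e^{i\theta}\prod_{j=1}^{n-1}\frac{z-\alpha_j}{1-\bar\alpha_j z}$ with $\theta\in\mathbb{R}$ and $|\alpha_j|\le 1$ (factors with $|\alpha_j|=1$ are interpreted as the corresponding unimodular constants, so the degree may be less than $n-1$). $\|\cdot\|$ is the matrix 2-norm and $\langle\cdot,\cdot\rangle$ the standard inner product on $\mathbb{C}^n$. *)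

theory Defs
  imports "HOL-Analysis.Analysis"
begin

definition cnj_transpose :: "complex^'n^'m \<Rightarrow> complex^'m^'n" where
  "cnj_transpose A = (\<chi> i j. cnj (A $ j $ i))"

definition cinner :: "complex^'n \<Rightarrow> complex^'n \<Rightarrow> complex" where
  "cinner x y = (\<Sum>i\<in>UNIV. x $ i * cnj (y $ i))"

definition mat_spectrum :: "complex^'n^'n \<Rightarrow> complex set" where
  "mat_spectrum A = {l. \<exists>v. v \<noteq> 0 \<and> A *v v = l *s v}"

definition mat_norm2 :: "complex^'n^'n \<Rightarrow> real" where
  "mat_norm2 A = onorm (\<lambda>x. A *v x)"

definition singular_values :: "complex^'n^'n \<Rightarrow> real set" where
  "singular_values A = {\<sigma>. \<sigma> \<ge> 0 \<and>
     (\<exists>v. v \<noteq> 0 \<and> (cnj_transpose A ** A) *v v = complex_of_real (\<sigma>\<^sup>2) *s v)}"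

definition largest_singular_value :: "complex^'n^'n \<Rightarrow> real" where
  "largest_singular_value A = Max (singular_values A)"

definition right_singular_vector :: "complex^'n^'n \<Rightarrow> real \<Rightarrow> complex^'n \<Rightarrow> bool" where
  "right_singular_vector A \<sigma> v \<longleftrightarrow> \<sigma> \<ge> 0 \<and> v \<noteq> 0 \<and>
     (cnj_transpose A ** A) *v v = complex_of_real (\<sigma>\<^sup>2) *s v"

text \<open>Blaschke factor (z - a)/(1 - conj a z) evaluated at a matrix.
  For |a| = 1 and spectrum of Psi in the open disk this equals the constant -a I.\<close>
definition blaschke_factor_mat :: "complex \<Rightarrow> complex^'n^'n \<Rightarrow> complex^'n^'n" where
  "blaschke_factor_mat a Psi = (Psi - mat a) ** matrix_inv (mat 1 - mat (cnj a) ** Psi)"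

definition blaschke_mat :: "real \<Rightarrow> complex list \<Rightarrow> complex^'n^'n \<Rightarrow> complex^'n^'n" where
  "blaschke_mat \<theta> as Psi = mat (cis \<theta>) ** foldr (\<lambda>a M. blaschke_factor_mat a Psi ** M) as (mat 1)"

text \<open>Parameters of a Blaschke product of degree at most m.\<close>
definition blaschke_params :: "nat \<Rightarrow> complex list \<Rightarrow> bool" where
  "blaschke_params m as \<longleftrightarrow> length as = m \<and> (\<forall>a\<in>set as. cmod a \<le> 1)"

end

(*
  Write B(Psi) = e P(Psi) Q(Psi)^-1 with P the monic polynomial with roots a_j and Q the product
  of the factors 1 - conj(a_j) z.  For |t| < 1 the composition (B - t) / (1 - conj t B) is again a
  Blaschke product of the same degree: its numerator e P - t Q has all roots in the closed disk
  because |Q| <= |P| outside the disk, and its denominator is the reflection of that numerator on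
  the unit circle.  By maximality its norm at Psi is at most sigma_1, and testing the identity
  B_t(Psi) (I - conj t B(Psi)) = B(Psi) - t I on v_1 gives
  |B v_1 - t v_1| <= sigma_1 |v_1 - conj t B v_1|.  With c = <B v_1, v_1> and t = s c this expands
  to 2 s |c|^2 (sigma_1^2 - 1) <= O(s^2), which forces c = 0 because sigma_1 >= |B(Psi)| > 1.
*)

theory Submission
  imports Defs "HOL-Computational_Algebra.Fundamental_Theorem_Algebra"
begin

section \<open>Scalar matrices and polynomials of a matrix\<close>

lemma scalar_mat_mult:
  fixes A :: "'a::semiring_1^'m^'n"
  shows "mat c ** A = (\<chi> i j. c * A $ i $ j)"
  by (simp add: vec_eq_iff matrix_matrix_mult_def mat_def if_distrib if_distribR cong: if_cong)

lemma mult_scalar_mat: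
  fixes A :: "'a::semiring_1^'m^'n"
  shows "A ** mat c = (\<chi> i j. A $ i $ j * c)"
  by (simp add: vec_eq_iff matrix_matrix_mult_def mat_def if_distrib if_distribR cong: if_cong)

lemma scalar_mat_commute: "mat c ** A = A ** (mat c :: 'a::comm_semiring_1^'n^'n)"
  by (simp add: scalar_mat_mult mult_scalar_mat mult.commute)

lemma mat_mult_mat: "mat a ** mat b = (mat (a * b) :: 'a::semiring_1^'n^'n)"
  unfolding scalar_mat_mult by (simp add: vec_eq_iff mat_def)

lemma mat_add: "mat a + mat b = (mat (a + b) :: 'a::monoid_add^'n^'n)"
  by (simp add: vec_eq_iff mat_def)

lemma mat_uminus: "mat (- a) = - (mat a :: 'a::group_add^'n^'n)"
  by (simp add: vec_eq_iff mat_def)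

lemma matrix_add_rdistrib: "(B + C) ** A = B ** A + C ** (A :: 'a::semiring_1^_^_)"
  by (simp add: vec_eq_iff matrix_matrix_mult_def sum.distrib[symmetric] distrib_right)

lemma matrix_diff_rdistrib: "(B - C) ** A = B ** A - C ** (A :: 'a::ring_1^_^_)"
  by (simp add: vec_eq_iff matrix_matrix_mult_def sum_subtractf[symmetric] left_diff_distrib)

lemma matrix_diff_ldistrib: "A ** (B - C) = A ** B - A ** (C :: 'a::ring_1^_^_)"
  by (simp add: vec_eq_iff matrix_matrix_mult_def sum_subtractf[symmetric] right_diff_distrib)

lemma scalar_mat_vector_mult: "mat c *v x = c *s (x :: 'a::semiring_1^'n)"
  by (simp add: vec_eq_iff matrix_vector_mult_def mat_def if_distrib if_distribR cong: if_cong)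

lemma matrix_inv_invertible:
  assumes "invertible (A :: 'a::semiring_1^'n^'n)"
  shows "A ** matrix_inv A = mat 1" "matrix_inv A ** A = mat 1"
  using someI_ex[OF assms[unfolded invertible_def]] by (auto simp: matrix_inv_def)

lemma cancel_invertible_right:
  assumes "invertible (C :: 'a::comm_ring_1^'n^'n)" and "A ** C = B ** C"
  shows "A = B"
  using arg_cong[OF assms(2), of "\<lambda>M. M ** matrix_inv C"]
  by (simp add: matrix_mul_assoc[symmetric] matrix_inv_invertible(1)[OF assms(1)])

definition poly_mat :: "'a::comm_ring_1^'n^'n \<Rightarrow> 'a poly \<Rightarrow> 'a^'n^'n" where
  "poly_mat X p = foldr (\<lambda>a M. mat a + X ** M) (coeffs p) 0"

lemma poly_mat_0 [simp]: "poly_mat X 0 = 0"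
  by (simp add: poly_mat_def)

lemma poly_mat_pCons [simp]: "poly_mat X (pCons a p) = mat a + X ** poly_mat X p"
  by (cases "p = 0 \<and> a = 0") (auto simp: poly_mat_def cCons_def)

lemma poly_mat_1 [simp]: "poly_mat X 1 = mat 1"
  by (simp add: one_pCons)

lemma poly_mat_add: "poly_mat X (p + q) = poly_mat X p + poly_mat X q"
  by (induction p q rule: poly_induct2) (simp_all add: matrix_add_ldistrib mat_add[symmetric] add_ac)

lemma poly_mat_smult: "poly_mat X (smult c p) = mat c ** poly_mat X p"
  by (induction p)
    (simp_all add: matrix_add_ldistrib mat_mult_mat matrix_mul_assoc scalar_mat_commute[of c X])

lemma poly_mat_diff: "poly_mat X (p - q) = poly_mat X p - poly_mat X q"
  using poly_mat_add[of X "p - q" q] by simp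

lemma poly_mat_mult: "poly_mat X (p * q) = poly_mat X p ** poly_mat X q"
  by (induction p) (simp_all add: poly_mat_add poly_mat_smult matrix_add_rdistrib matrix_mul_assoc)

lemma poly_mat_commute: "poly_mat X p ** poly_mat X q = poly_mat X q ** poly_mat X p"
  by (metis poly_mat_mult mult.commute)

lemma poly_mat_monic_linear: "poly_mat X [:- a, 1:] = X - mat a"
  by (simp add: mat_uminus)

lemma poly_mat_one_minus_linear: "poly_mat X [:1, - c:] = mat 1 - mat c ** X"
  using matrix_diff_ldistrib[of X 0 "mat c"] by (simp add: mat_uminus scalar_mat_commute)

section \<open>The complex inner product\<close>

lemma cinner_diff_left: "cinner (x - y) z = cinner x z - cinner y z"
  by (simp add: cinner_def left_diff_distrib sum_subtractf)

lemma cinner_diff_right: "cinner x (y - z) = cinner x y - cinner x z"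
  by (simp add: cinner_def right_diff_distrib sum_subtractf)

lemma cinner_scale_left: "cinner (c *s x) y = c * cinner x y"
  by (simp add: cinner_def sum_distrib_left mult.assoc)

lemma cinner_scale_right: "cinner x (c *s y) = cnj c * cinner x y"
  by (simp add: cinner_def sum_distrib_left algebra_simps)

lemma cinner_commute: "cinner y x = cnj (cinner x y)"
  by (simp add: cinner_def mult.commute)

lemma inner_eq_Re_cinner: "inner x y = Re (cinner x y)"
  by (simp add: inner_vec_def cinner_def inner_complex_def)

lemma cinner_self: "cinner x x = complex_of_real ((norm x)\<^sup>2)"
proof -
  have "Im (cinner x x) = 0"
    by (simp add: cinner_def)
  then show ?thesis
    by (simp add: complex_eq_iff power2_norm_eq_inner inner_eq_Re_cinner)
qed

lemma cinner_cnj_transpose: "cinner (A *v x) y = cinner x (cnj_transpose A *v y)"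
proof -
  have "cinner (A *v x) y = (\<Sum>i\<in>UNIV. \<Sum>j\<in>UNIV. A$i$j * x$j * cnj (y$i))"
    by (simp add: cinner_def matrix_vector_mult_def sum_distrib_right)
  also have "\<dots> = (\<Sum>j\<in>UNIV. \<Sum>i\<in>UNIV. A$i$j * x$j * cnj (y$i))"
    by (rule sum.swap)
  also have "\<dots> = cinner x (cnj_transpose A *v y)"
    by (simp add: cinner_def matrix_vector_mult_def cnj_transpose_def sum_distrib_left algebra_simps)
  finally show ?thesis .
qed

lemma cinner_gram: "cinner ((cnj_transpose A ** A) *v x) y = cinner (A *v x) (A *v y)"
  by (metis cinner_cnj_transpose cinner_commute matrix_vector_mul_assoc)

lemma norm_diff_scale_sq:
  "(norm (a - z *s b))\<^sup>2 = (norm a)\<^sup>2 - 2 * Re (cnj z * cinner a b) + (cmod z)\<^sup>2 * (norm b)\<^sup>2"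
proof -
  have "complex_of_real ((norm (a - z *s b))\<^sup>2) = cinner (a - z *s b) (a - z *s b)"
    by (rule cinner_self[symmetric])
  also have "\<dots> = cinner a a - (cnj z * cinner a b + cnj (cnj z * cinner a b)) + z * cnj z * cinner b b"
    by (simp add: cinner_diff_left cinner_diff_right cinner_scale_left cinner_scale_right
        cinner_commute[of b a] algebra_simps)
  also have "\<dots> = complex_of_real ((norm a)\<^sup>2 - 2 * Re (cnj z * cinner a b) + (cmod z)\<^sup>2 * (norm b)\<^sup>2)"
    by (simp only: complex_add_cnj cinner_self complex_norm_square[symmetric] of_real_add
        of_real_diff of_real_mult of_real_power)
  finally show ?thesis
    by (simp only: of_real_eq_iff)
qed

lemma norm_sq_if_gram_eigenvector:
  assumes "(cnj_transpose A ** A) *v v = complex_of_real s *s v"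
  shows "(norm (A *v v))\<^sup>2 = s * (norm v)\<^sup>2"
proof -
  have "complex_of_real ((norm (A *v v))\<^sup>2) = cinner ((cnj_transpose A ** A) *v v) v"
    by (simp add: cinner_self cinner_gram)
  also have "\<dots> = complex_of_real (s * (norm v)\<^sup>2)"
    by (simp add: assms cinner_scale_left cinner_self)
  finally show ?thesis
    by (simp only: of_real_eq_iff)
qed

section \<open>Singular values and the matrix 2-norm\<close>

lemma nonpos_if_linear_le_quadratic:
  fixes a b \<delta> :: real
  assumes "0 < \<delta>" and le: "\<And>s. 0 < s \<Longrightarrow> s < \<delta> \<Longrightarrow> s * a \<le> s\<^sup>2 * b"
  shows "a \<le> 0"
proof (rule ccontr)
  assume "\<not> a \<le> 0"
  define s where "s = min (\<delta> / 2) (a / (2 * (\<bar>b\<bar> + 1)))"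
  have s: "0 < s" "s < \<delta>"
    using \<open>0 < \<delta>\<close> \<open>\<not> a \<le> 0\<close> by (auto simp: s_def)
  have "s * \<bar>b\<bar> < a"
  proof -
    have "s \<le> a / (2 * (\<bar>b\<bar> + 1))"
      by (simp add: s_def)
    then have "s * \<bar>b\<bar> \<le> a / (2 * (\<bar>b\<bar> + 1)) * \<bar>b\<bar>"
      by (rule mult_right_mono) simp
    also have "\<dots> < a"
      using \<open>\<not> a \<le> 0\<close> by (auto simp: field_simps intro!: add_nonneg_pos)
    finally show ?thesis .
  qed
  then have "s\<^sup>2 * b < s * a"
    using s abs_ge_self[of b] by (simp add: power2_eq_square mult.assoc mult_strict_left_mono
        order.strict_trans1[OF mult_left_mono[of b "\<bar>b\<bar>" s]])
  with le[OF s] show False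
    by linarith
qed

lemma norm_maximizer_first_order:
  fixes f :: "'a::real_inner \<Rightarrow> 'b::real_inner"
  assumes "linear f" and bound: "\<And>y. norm (f y) \<le> L * norm y"
    and "norm x = 1" and "norm (f x) = L"
  shows "inner (f x) (f y) = L\<^sup>2 * inner x y"
proof -
  define g where "g = inner (f x) (f y) - L\<^sup>2 * inner x y"
  have expand: "(norm (u + z *\<^sub>R v))\<^sup>2 = (norm u)\<^sup>2 + 2 * z * inner u v + z\<^sup>2 * (norm v)\<^sup>2"
    for u v :: "'c::real_inner" and z
    using dot_norm[of u "z *\<^sub>R v"] by (simp add: power_mult_distrib)
  have quadratic: "z * (2 * g) \<le> z\<^sup>2 * (L\<^sup>2 * (norm y)\<^sup>2)" for z
  proof -
    have "(norm (f (x + z *\<^sub>R y)))\<^sup>2 \<le> (L * norm (x + z *\<^sub>R y))\<^sup>2"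
      using bound by (intro power_mono) auto
    moreover have "f (x + z *\<^sub>R y) = f x + z *\<^sub>R f y"
      using \<open>linear f\<close> by (simp add: linear_add linear_scale)
    ultimately have "L\<^sup>2 + 2 * z * inner (f x) (f y) + z\<^sup>2 * (norm (f y))\<^sup>2
        \<le> L\<^sup>2 * (1 + 2 * z * inner x y + z\<^sup>2 * (norm y)\<^sup>2)"
      using assms(3,4) by (simp add: expand power_mult_distrib)
    then have "z * (2 * g) + z\<^sup>2 * (norm (f y))\<^sup>2 \<le> z\<^sup>2 * (L\<^sup>2 * (norm y)\<^sup>2)"
      by (simp add: g_def algebra_simps)
    then show ?thesis
      by (smt (verit) zero_le_power2 mult_nonneg_nonneg)
  qed
  have "2 * g \<le> 0"
    by (rule nonpos_if_linear_le_quadratic[of 1]) (use quadratic in auto)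
  moreover have "- (2 * g) \<le> 0"
    by (rule nonpos_if_linear_le_quadratic[of 1]) (use quadratic[of "- _"] in auto)
  ultimately show ?thesis
    by (simp add: g_def)
qed

lemma singular_value_bounds_norm:
  fixes A :: "complex^'n^'n"
  shows "\<exists>L\<in>singular_values A. \<forall>y. norm (A *v y) \<le> L * norm y"
proof -
  have "continuous_on (sphere 0 1) (\<lambda>y. norm (A *v y))"
    by (intro continuous_on_norm linear_continuous_on matrix_vector_mul_bounded_linear)
  then have "\<exists>x\<in>sphere 0 1. \<forall>y\<in>sphere 0 1. norm (A *v y) \<le> norm (A *v x)"
    by (intro continuous_attains_sup compact_sphere) auto
  then obtain x where x: "x \<in> sphere 0 1"
    and max: "\<And>y. y \<in> sphere 0 1 \<Longrightarrow> norm (A *v y) \<le> norm (A *v x)"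
    by blast
  define L where "L = norm (A *v x)"
  have bound: "norm (A *v y) \<le> L * norm y" for y
  proof (cases "y = 0")
    case False
    then have "norm (A *v ((1 / norm y) *\<^sub>R y)) \<le> L"
      using max L_def by simp
    with False show ?thesis
      by (simp add: linear_scale[OF matrix_vector_mul_linear] field_simps)
  qed simp
  \<comment> \<open>a maximiser of the norm on the unit sphere is an eigenvector of the Gram matrix\<close>
  define g where "g = (cnj_transpose A ** A) *v x - complex_of_real (L\<^sup>2) *s x"
  have "Re (cinner g y) = 0" for y
    using norm_maximizer_first_order[OF matrix_vector_mul_linear bound, of x y] x
    by (simp add: g_def L_def cinner_diff_left cinner_scale_left cinner_gram inner_eq_Re_cinner)
  from this[of g] have "g = 0"
    by (simp add: cinner_self)
  then have "(cnj_transpose A ** A) *v x = complex_of_real (L\<^sup>2) *s x"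
    by (simp add: g_def)
  moreover have "x \<noteq> 0" "L \<ge> 0"
    using x by (auto simp: L_def)
  ultimately have "L \<in> singular_values A"
    unfolding singular_values_def by blast
  with bound show ?thesis
    by blast
qed

lemma cinner_gram_eigenvectors:
  assumes "(cnj_transpose A ** A) *v v = complex_of_real s *s v"
    and "(cnj_transpose A ** A) *v w = complex_of_real t *s w" and "s \<noteq> t"
  shows "cinner v w = 0"
proof -
  have "complex_of_real s * cinner v w = cinner (A *v v) (A *v w)"
    using assms(1) by (simp add: cinner_gram[symmetric] cinner_scale_left)
  also have "\<dots> = cnj (cinner (A *v w) (A *v v))"
    by (rule cinner_commute)
  also have "\<dots> = complex_of_real t * cinner v w"
    using assms(2) by (simp add: cinner_gram[symmetric] cinner_scale_left cinner_commute[of w v])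
  finally have "complex_of_real (s - t) * cinner v w = 0"
    by (simp add: left_diff_distrib)
  with assms(3) show ?thesis
    by simp
qed

lemma finite_singular_values: "finite (singular_values (A::complex^'n^'n))"
proof -
  let ?S = "singular_values A"
  have "\<forall>\<sigma>\<in>?S. \<exists>v. v \<noteq> 0 \<and> (cnj_transpose A ** A) *v v = complex_of_real (\<sigma>\<^sup>2) *s v"
    by (simp add: singular_values_def)
  then obtain V where V: "\<And>\<sigma>. \<sigma> \<in> ?S \<Longrightarrow>
      V \<sigma> \<noteq> 0 \<and> (cnj_transpose A ** A) *v V \<sigma> = complex_of_real (\<sigma>\<^sup>2) *s V \<sigma>"
    by metis
  have nonneg: "\<sigma> \<ge> 0" if "\<sigma> \<in> ?S" for \<sigma>
    using that by (simp add: singular_values_def)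
  have orth: "inner (V \<sigma>) (V \<tau>) = 0" if "\<sigma> \<in> ?S" "\<tau> \<in> ?S" "\<sigma> \<noteq> \<tau>" for \<sigma> \<tau>
  proof -
    have "\<sigma>\<^sup>2 \<noteq> \<tau>\<^sup>2"
      using that nonneg by simp
    then have "cinner (V \<sigma>) (V \<tau>) = 0"
      using V[OF that(1)] V[OF that(2)] by (blast intro: cinner_gram_eigenvectors)
    then show ?thesis
      by (simp add: inner_eq_Re_cinner)
  qed
  then have "inj_on V ?S"
    using V by (metis inj_onI inner_eq_zero_iff)
  moreover have "independent (V ` ?S)"
    by (rule pairwise_orthogonal_independent)
      (use orth V in \<open>auto simp: pairwise_def orthogonal_def\<close>)
  then have "finite (V ` ?S)"
    using independent_bound by blast
  ultimately show ?thesis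
    using finite_imageD by blast
qed

lemma norm_le_largest_singular_value:
  fixes A :: "complex^'n^'n"
  shows "norm (A *v y) \<le> largest_singular_value A * norm y"
proof -
  obtain L where "L \<in> singular_values A" and bound: "\<And>z. norm (A *v z) \<le> L * norm z"
    using singular_value_bounds_norm[of A] by blast
  then have "L \<le> largest_singular_value A"
    unfolding largest_singular_value_def by (simp add: finite_singular_values)
  then show ?thesis
    by (intro order_trans[OF bound mult_right_mono]) simp_all
qed

lemma mat_norm2_le_largest_singular_value: "mat_norm2 A \<le> largest_singular_value A"
  unfolding mat_norm2_def by (rule onorm_le) (rule norm_le_largest_singular_value)

lemma norm_mult_le_mat_norm2: "norm (A *v x) \<le> mat_norm2 A * norm x"
  unfolding mat_norm2_def by (rule onorm[OF matrix_vector_mul_bounded_linear])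

section \<open>Numerator and denominator of a Blaschke product\<close>

definition blaschke_num :: "complex list \<Rightarrow> complex poly" where
  "blaschke_num as = (\<Prod>a\<leftarrow>as. [:- a, 1:])"

definition blaschke_den :: "complex list \<Rightarrow> complex poly" where
  "blaschke_den as = (\<Prod>a\<leftarrow>as. [:1, - cnj a:])"

lemma degree_prod_linear_factors_le:
  "degree (\<Prod>a\<leftarrow>as. [:f a, g a:]) \<le> length as"
proof (induction as)
  case (Cons a as)
  have "degree ([:f a, g a:] * (\<Prod>a\<leftarrow>as. [:f a, g a:]))
      \<le> degree [:f a, g a:] + degree (\<Prod>a\<leftarrow>as. [:f a, g a:])"
    by (rule degree_mult_le)
  with Cons show ?case
    by (simp del: mult_pCons_left split: if_splits)
qed simp

lemma coeff_prod_linear_factors: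
  "coeff (\<Prod>a\<leftarrow>as. [:f a, g a:]) (length as) = (\<Prod>a\<leftarrow>as. g a :: 'a::comm_ring_1)"
proof (induction as)
  case (Cons a as)
  have "coeff (\<Prod>a\<leftarrow>as. [:f a, g a:]) (Suc (length as)) = 0"
    using degree_prod_linear_factors_le[of f g as] by (simp add: coeff_eq_0)
  with Cons show ?case
    by simp
qed simp

lemma poly_blaschke_num_eq_0_iff: "poly (blaschke_num as) b = 0 \<longleftrightarrow> b \<in> set as"
  by (induction as) (auto simp: blaschke_num_def)

lemma poly_blaschke_den_on_circle:
  assumes "cmod z = 1"
  shows "poly (blaschke_den as) z = z ^ length as * cnj (poly (blaschke_num as) z)"
proof (induction as)
  case (Cons a as)
  have "1 - cnj a * z = z * cnj (z - a)"
    using assms complex_norm_square[of z] by (simp add: algebra_simps)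
  with Cons show ?case
    by (simp add: blaschke_num_def blaschke_den_def algebra_simps)
qed (simp add: blaschke_num_def blaschke_den_def)

lemma cmod_one_minus_cnj_mult_le:
  assumes "cmod a \<le> 1" and "cmod b \<ge> 1"
  shows "cmod (1 - cnj a * b) \<le> cmod (b - a)"
proof -
  have "complex_of_real ((cmod (b - a))\<^sup>2 - (cmod (1 - cnj a * b))\<^sup>2)
      = complex_of_real (((cmod b)\<^sup>2 - 1) * (1 - (cmod a)\<^sup>2))"
    by (simp only: of_real_diff of_real_mult of_real_1 complex_norm_square complex_cnj_diff
        complex_cnj_mult complex_cnj_cnj complex_cnj_one) algebra
  moreover have "((cmod b)\<^sup>2 - 1) * (1 - (cmod a)\<^sup>2) \<ge> 0"
    using assms by (intro mult_nonneg_nonneg) (simp_all add: power_le_one)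
  ultimately have "(cmod (1 - cnj a * b))\<^sup>2 \<le> (cmod (b - a))\<^sup>2"
    by (simp only: of_real_eq_iff)
  then show ?thesis
    by (rule power2_le_imp_le) simp
qed

lemma cmod_poly_blaschke_den_le_num:
  assumes "\<forall>a\<in>set as. cmod a \<le> 1" and "cmod b \<ge> 1"
  shows "cmod (poly (blaschke_den as) b) \<le> cmod (poly (blaschke_num as) b)"
  using assms(1)
proof (induction as)
  case (Cons a as)
  then have "cmod (1 - cnj a * b) * cmod (poly (blaschke_den as) b)
      \<le> cmod (b - a) * cmod (poly (blaschke_num as) b)"
    using assms(2) by (intro mult_mono cmod_one_minus_cnj_mult_le) auto
  moreover have "poly (blaschke_den (a # as)) b = (1 - cnj a * b) * poly (blaschke_den as) b"
    "poly (blaschke_num (a # as)) b = (b - a) * poly (blaschke_num as) b"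
    by (simp_all add: blaschke_num_def blaschke_den_def algebra_simps)
  ultimately show ?case
    by (simp only: norm_mult)
qed (simp add: blaschke_num_def blaschke_den_def)

lemma infinite_unit_circle: "infinite {z::complex. cmod z = 1}"
proof -
  have "uncountable (sphere (0::complex) 1)"
    by (rule connected_uncountable[of _ 1 "-1"]) (auto intro: connected_sphere)
  then show ?thesis
    by (auto simp: sphere_def dest: countable_finite)
qed

lemma poly_eqI_on_circle:
  assumes "\<And>z. cmod z = 1 \<Longrightarrow> poly p z = poly q z"
  shows "p = q"
proof -
  have "{z. cmod z = 1} \<subseteq> {z. poly (p - q) z = 0}"
    using assms by auto
  then have "p - q = 0"
    using infinite_unit_circle poly_roots_finite finite_subset by blast
  then show ?thesis
    by simp
qed

lemma complex_poly_eq_smult_blaschke_num: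
  fixes p :: "complex poly"
  obtains bs where "length bs = degree p" "p = smult (lead_coeff p) (blaschke_num bs)"
proof -
  obtain bs where bs: "mset bs = proots p"
    using ex_mset by blast
  have "length bs = degree p"
    by (metis bs size_mset size_proots_complex)
  moreover have "(\<Prod>x\<in>#proots p. [:- x, 1:]) = blaschke_num bs"
    unfolding blaschke_num_def bs[symmetric] mset_map[symmetric] prod_mset_prod_list ..
  then have "p = smult (lead_coeff p) (blaschke_num bs)"
    using complex_poly_decompose_multiset[of p] by simp
  ultimately show ?thesis
    using that by blast
qed

section \<open>Composing a Blaschke product with a disk automorphism\<close>

lemma moebius_root_in_disk:
  assumes "\<forall>a\<in>set as. cmod a \<le> 1" and "cmod e = 1" and "cmod t < 1"
    and root: "e * poly (blaschke_num as) b = t * poly (blaschke_den as) b"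
  shows "cmod b \<le> 1"
proof (rule ccontr)
  assume "\<not> cmod b \<le> 1"
  then have "cmod (poly (blaschke_den as) b) \<le> cmod (poly (blaschke_num as) b)"
    using assms(1) by (intro cmod_poly_blaschke_den_le_num) auto
  moreover have "cmod (poly (blaschke_num as) b) = cmod t * cmod (poly (blaschke_den as) b)"
    using arg_cong[OF root, of cmod] assms(2) by (simp add: norm_mult)
  ultimately have "(1 - cmod t) * cmod (poly (blaschke_num as) b) \<le> 0"
    by (simp add: mult_left_mono algebra_simps)
  with \<open>cmod t < 1\<close> have "poly (blaschke_num as) b = 0"
    by (simp add: mult_le_0_iff)
  with assms(1) \<open>\<not> cmod b \<le> 1\<close> show False
    by (auto simp: poly_blaschke_num_eq_0_iff)
qed

lemma moebius_blaschke_num_degree: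
  assumes as: "\<forall>a\<in>set as. cmod a \<le> 1" and e: "cmod e = 1" and t: "cmod t < 1"
  defines "N \<equiv> smult e (blaschke_num as) - smult t (blaschke_den as)"
  shows "degree N = length as" and "lead_coeff N \<noteq> 0"
proof -
  have "degree N \<le> length as"
    unfolding N_def blaschke_num_def blaschke_den_def
    by (intro degree_diff_le order.trans[OF degree_smult_le] degree_prod_linear_factors_le)
  moreover have "coeff N (length as) = e - t * (\<Prod>a\<leftarrow>as. - cnj a)"
    using coeff_prod_linear_factors[of "\<lambda>a. - a" "\<lambda>_. 1" as]
      coeff_prod_linear_factors[of "\<lambda>_. 1" "\<lambda>a. - cnj a" as]
    by (simp add: N_def blaschke_num_def blaschke_den_def map_replicate_const)
  moreover have "cmod (t * (\<Prod>a\<leftarrow>as. - cnj a)) < 1"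
  proof -
    have "cmod (\<Prod>a\<leftarrow>as. - cnj a) \<le> 1"
      using as by (induction as) (simp_all add: norm_mult mult_le_one)
    then have "cmod t * cmod (\<Prod>a\<leftarrow>as. - cnj a) \<le> cmod t"
      by (simp add: mult_left_le)
    with t show ?thesis
      by (simp add: norm_mult)
  qed
  then have "e - t * (\<Prod>a\<leftarrow>as. - cnj a) \<noteq> 0"
    using e by auto
  ultimately have "coeff N (length as) \<noteq> 0" "degree N \<le> length as"
    by simp_all
  then show deg: "degree N = length as"
    by (simp add: antisym le_degree)
  with \<open>coeff N (length as) \<noteq> 0\<close> show "lead_coeff N \<noteq> 0"
    by simp
qed

lemma moebius_blaschke_num:
  assumes as: "\<forall>a\<in>set as. cmod a \<le> 1" and e: "cmod e = 1" and t: "cmod t < 1"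
  obtains bs c where "length bs = length as" "\<forall>b\<in>set bs. cmod b \<le> 1" "c \<noteq> 0"
    "smult e (blaschke_num as) - smult t (blaschke_den as) = smult c (blaschke_num bs)"
proof -
  define N where "N = smult e (blaschke_num as) - smult t (blaschke_den as)"
  obtain bs where bs: "length bs = degree N" "N = smult (lead_coeff N) (blaschke_num bs)"
    by (rule complex_poly_eq_smult_blaschke_num)
  have disk: "cmod b \<le> 1" if "b \<in> set bs" for b
  proof (rule moebius_root_in_disk[OF as e t])
    have "poly N b = 0"
      using that by (subst bs(2)) (simp add: poly_blaschke_num_eq_0_iff)
    then show "e * poly (blaschke_num as) b = t * poly (blaschke_den as) b"
      by (simp add: N_def)
  qed
  show ?thesis
  proof (rule that)
    show "length bs = length as" and "lead_coeff N \<noteq> 0"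
      using bs(1) moebius_blaschke_num_degree[OF as e t] by (simp_all add: N_def)
    show "\<forall>b\<in>set bs. cmod b \<le> 1"
      using disk by blast
    show "smult e (blaschke_num as) - smult t (blaschke_den as) = smult (lead_coeff N) (blaschke_num bs)"
      unfolding N_def[symmetric] by (rule bs(2))
  qed
qed

lemma moebius_blaschke_den:
  assumes e: "cmod e = 1" and len: "length bs = length as"
    and num: "smult e (blaschke_num as) - smult t (blaschke_den as) = smult c (blaschke_num bs)"
  shows "blaschke_den as - smult (cnj t * e) (blaschke_num as) = smult (e * cnj c) (blaschke_den bs)"
proof (rule poly_eqI_on_circle)
  fix z :: complex
  assume z: "cmod z = 1"
  define w where "w = z ^ length as"
  define P Q Pb Qb where "P = poly (blaschke_num as) z" and "Q = poly (blaschke_den as) z"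
    and "Pb = poly (blaschke_num bs) z" and "Qb = poly (blaschke_den bs) z"
  have Q: "Q = w * cnj P" and Qb: "Qb = w * cnj Pb"
    using poly_blaschke_den_on_circle[OF z] len by (simp_all add: w_def P_def Q_def Pb_def Qb_def)
  have "c * Pb = e * P - t * Q"
    using arg_cong[OF num, of "\<lambda>p. poly p z"] by (simp add: P_def Q_def Pb_def)
  then have cPb: "cnj c * cnj Pb = cnj e * cnj P - cnj t * (cnj w * P)"
    by (metis Q complex_cnj_cnj complex_cnj_diff complex_cnj_mult)
  have "cmod w = 1"
    using z by (simp add: w_def norm_power)
  then have unimodular: "w * cnj w = 1" "e * cnj e = 1"
    using e by (simp_all flip: complex_norm_square)
  have "e * cnj c * Qb = e * w * (cnj c * cnj Pb)"
    by (simp add: Qb algebra_simps)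
  also have "\<dots> = (e * cnj e) * (w * cnj P) - cnj t * e * P * (w * cnj w)"
    by (simp only: cPb) (simp add: algebra_simps)
  also have "\<dots> = Q - cnj t * e * P"
    by (simp add: unimodular Q)
  finally have "e * cnj c * Qb = Q - cnj t * e * P" .
  then show "poly (blaschke_den as - smult (cnj t * e) (blaschke_num as)) z
      = poly (smult (e * cnj c) (blaschke_den bs)) z"
    by (simp add: P_def Q_def Qb_def mult.assoc)
qed

lemma invertible_one_minus_scalar_mult:
  fixes Psi :: "complex^'n^'n"
  assumes spec: "\<forall>l\<in>mat_spectrum Psi. cmod l < 1" and "cmod a \<le> 1"
  shows "invertible (mat 1 - mat a ** Psi)"
proof (rule ccontr)
  assume "\<not> invertible (mat 1 - mat a ** Psi)"
  then obtain x where x: "(mat 1 - mat a ** Psi) *v x = 0" "x \<noteq> 0"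
    unfolding invertible_left_inverse matrix_left_invertible_ker by blast
  then have eq: "x = a *s (Psi *v x)"
    by (simp add: matrix_vector_mult_diff_rdistrib matrix_vector_mul_assoc[symmetric] scalar_mat_vector_mult)
  with x(2) have "a \<noteq> 0"
    by auto
  then have "Psi *v x = (1 / a) *s x"
    by (subst eq) simp
  with x(2) have "1 / a \<in> mat_spectrum Psi"
    unfolding mat_spectrum_def by blast
  with spec \<open>a \<noteq> 0\<close> have "1 < cmod a"
    by (auto simp: norm_divide divide_less_eq)
  with \<open>cmod a \<le> 1\<close> show False
    by simp
qed

lemma invertible_poly_mat_blaschke_den:
  fixes Psi :: "complex^'n^'n"
  assumes "\<forall>l\<in>mat_spectrum Psi. cmod l < 1" and "\<forall>a\<in>set as. cmod a \<le> 1"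
  shows "invertible (poly_mat Psi (blaschke_den as))"
  using assms(2)
proof (induction as)
  case (Cons a as)
  have "invertible (mat 1 - mat (cnj a) ** Psi)"
    using Cons.prems by (intro invertible_one_minus_scalar_mult[OF assms(1)]) simp
  with Cons show ?case
    unfolding blaschke_den_def list.map prod_list.Cons poly_mat_mult poly_mat_one_minus_linear
    by (simp add: invertible_mult)
qed (auto simp: blaschke_den_def invertible_def)

lemma blaschke_factors_mult_den:
  fixes Psi :: "complex^'n^'n"
  assumes spec: "\<forall>l\<in>mat_spectrum Psi. cmod l < 1" and "\<forall>a\<in>set as. cmod a \<le> 1"
  shows "foldr (\<lambda>a M. blaschke_factor_mat a Psi ** M) as (mat 1) ** poly_mat Psi (blaschke_den as)
    = poly_mat Psi (blaschke_num as)"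
  using assms(2)
proof (induction as)
  case (Cons a as)
  define Y where "Y = foldr (\<lambda>a M. blaschke_factor_mat a Psi ** M) as (mat 1)"
  define R where "R = mat 1 - mat (cnj a) ** Psi"
  have "invertible R"
    using Cons.prems unfolding R_def by (intro invertible_one_minus_scalar_mult[OF spec]) simp
  then have factor: "blaschke_factor_mat a Psi ** R = Psi - mat a"
    by (simp add: blaschke_factor_mat_def R_def matrix_mul_assoc[symmetric] matrix_inv_invertible(2))
  have commute: "R ** poly_mat Psi p = poly_mat Psi p ** R" for p
    unfolding R_def poly_mat_one_minus_linear[symmetric] by (rule poly_mat_commute)
  have "foldr (\<lambda>a M. blaschke_factor_mat a Psi ** M) (a # as) (mat 1) ** poly_mat Psi (blaschke_den (a # as))
      = blaschke_factor_mat a Psi ** (Y ** poly_mat Psi (blaschke_den as)) ** R"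
    unfolding Y_def blaschke_den_def list.map prod_list.Cons poly_mat_mult poly_mat_one_minus_linear
      R_def[symmetric] commute[unfolded blaschke_den_def]
    by (simp add: matrix_mul_assoc)
  also have "\<dots> = blaschke_factor_mat a Psi ** R ** poly_mat Psi (blaschke_num as)"
    using Cons by (simp add: Y_def) (metis commute matrix_mul_assoc)
  also have "\<dots> = poly_mat Psi (blaschke_num (a # as))"
    unfolding factor blaschke_num_def list.map prod_list.Cons poly_mat_mult poly_mat_monic_linear ..
  finally show ?case .
qed (simp add: blaschke_num_def blaschke_den_def)

lemma blaschke_mat_mult_den:
  fixes Psi :: "complex^'n^'n"
  assumes "\<forall>l\<in>mat_spectrum Psi. cmod l < 1" and "\<forall>a\<in>set as. cmod a \<le> 1"
  shows "blaschke_mat \<theta> as Psi ** poly_mat Psi (blaschke_den as) = mat (cis \<theta>) ** poly_mat Psi (blaschke_num as)"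
  using blaschke_factors_mult_den[OF assms] by (simp add: blaschke_mat_def matrix_mul_assoc[symmetric])

lemma moebius_of_matrix_fraction:
  fixes B B' Pa Qa Pb Qb :: "'a::comm_ring_1^'n^'n"
  assumes "invertible Qa" and BQ: "B ** Qa = mat e ** Pa" and B'Q: "B' ** Qb = mat u ** Pb"
    and num: "mat e ** Pa - mat t ** Qa = mat c ** Pb"
    and den: "Qa - mat (s * e) ** Pa = mat k ** Qb" and "u * k = c"
  shows "B' ** (mat 1 - mat s ** B) = B - mat t"
proof (rule cancel_invertible_right[OF \<open>invertible Qa\<close>])
  have "B' ** (mat 1 - mat s ** B) ** Qa = B' ** (Qa - mat (s * e) ** Pa)"
    by (simp add: matrix_diff_rdistrib matrix_mul_assoc[symmetric] BQ) (simp add: matrix_mul_assoc mat_mult_mat)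
  also have "\<dots> = mat k ** (B' ** Qb)"
    by (simp only: den matrix_mul_assoc scalar_mat_commute[of _ B'])
  also have "\<dots> = mat c ** Pb"
    using \<open>u * k = c\<close> by (simp add: B'Q matrix_mul_assoc mat_mult_mat mult.commute)
  also have "\<dots> = (B - mat t) ** Qa"
    by (simp add: matrix_diff_rdistrib BQ num)
  finally show "B' ** (mat 1 - mat s ** B) ** Qa = (B - mat t) ** Qa" .
qed

lemma blaschke_mat_moebius:
  fixes Psi :: "complex^'n^'n"
  assumes spec: "\<forall>l\<in>mat_spectrum Psi. cmod l < 1" and as: "blaschke_params m as" and t: "cmod t < 1"
  obtains \<theta>' bs where "blaschke_params m bs"
    "blaschke_mat \<theta>' bs Psi ** (mat 1 - mat (cnj t) ** blaschke_mat \<theta> as Psi) = blaschke_mat \<theta> as Psi - mat t"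
proof -
  let ?e = "cis \<theta>"
  have as_disk: "\<forall>a\<in>set as. cmod a \<le> 1"
    using as by (simp add: blaschke_params_def)
  obtain bs c where bs: "length bs = length as" "\<forall>b\<in>set bs. cmod b \<le> 1" "c \<noteq> 0"
    and num: "smult ?e (blaschke_num as) - smult t (blaschke_den as) = smult c (blaschke_num bs)"
    using moebius_blaschke_num[OF as_disk norm_cis t] by blast
  have den: "blaschke_den as - smult (cnj t * ?e) (blaschke_num as) = smult (?e * cnj c) (blaschke_den bs)"
    using moebius_blaschke_den[OF norm_cis bs(1) num] .
  \<comment> \<open>the composed function is \<open>c P\<^sub>b\<^sub>s / (e cnj c Q\<^sub>b\<^sub>s)\<close>, a Blaschke product with constant \<open>u\<close>\<close>
  define u where "u = c / (?e * cnj c)"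
  have "cmod u = 1"
    using bs(3) by (simp add: u_def norm_divide norm_mult)
  then have u: "cis (Arg u) = u"
    by (metis cis_Arg norm_zero sgn_eq zero_neq_one div_by_1 of_real_1)
  have "blaschke_mat (Arg u) bs Psi ** (mat 1 - mat (cnj t) ** blaschke_mat \<theta> as Psi)
      = blaschke_mat \<theta> as Psi - mat t"
  proof (rule moebius_of_matrix_fraction)
    show "invertible (poly_mat Psi (blaschke_den as))"
      by (rule invertible_poly_mat_blaschke_den[OF spec as_disk])
    show "blaschke_mat \<theta> as Psi ** poly_mat Psi (blaschke_den as) = mat ?e ** poly_mat Psi (blaschke_num as)"
      by (rule blaschke_mat_mult_den[OF spec as_disk])
    show "blaschke_mat (Arg u) bs Psi ** poly_mat Psi (blaschke_den bs) = mat u ** poly_mat Psi (blaschke_num bs)"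
      using blaschke_mat_mult_den[OF spec bs(2)] by (simp add: u)
    show "mat ?e ** poly_mat Psi (blaschke_num as) - mat t ** poly_mat Psi (blaschke_den as)
        = mat c ** poly_mat Psi (blaschke_num bs)"
      using arg_cong[OF num, of "poly_mat Psi"] by (simp add: poly_mat_diff poly_mat_smult)
    show "poly_mat Psi (blaschke_den as) - mat (cnj t * ?e) ** poly_mat Psi (blaschke_num as)
        = mat (?e * cnj c) ** poly_mat Psi (blaschke_den bs)"
      using arg_cong[OF den, of "poly_mat Psi"] by (simp add: poly_mat_diff poly_mat_smult)
    show "u * (?e * cnj c) = c"
      using bs(3) by (simp add: u_def)
  qed
  moreover have "blaschke_params m bs"
    using as bs by (simp add: blaschke_params_def)
  ultimately show ?thesis
    using that by blast
qed

section \<open>Maximality forces orthogonality\<close>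

lemma moebius_perturbation_inequality:
  fixes M M' :: "complex^'n^'n"
  assumes v: "(cnj_transpose M ** M) *v v = complex_of_real (\<sigma>\<^sup>2) *s v" and "\<sigma> > 1"
    and M': "M' ** (mat 1 - mat (cnj t) ** M) = M - mat t" "mat_norm2 M' \<le> \<sigma>"
  shows "2 * Re (cnj t * cinner (M *v v) v) \<le> (cmod t)\<^sup>2 * ((norm v)\<^sup>2 * (\<sigma>\<^sup>2 + 1))"
proof -
  define c V S where "c = cinner (M *v v) v" and "V = (norm v)\<^sup>2" and "S = \<sigma>\<^sup>2"
  define w where "w = v - cnj t *s (M *v v)"
  have "M' *v w = M *v v - t *s v"
    using arg_cong[OF M'(1), of "\<lambda>A. A *v v"]
    by (simp add: w_def matrix_vector_mul_assoc[symmetric] matrix_vector_mult_diff_rdistrib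
        scalar_mat_vector_mult)
  then have "norm (M *v v - t *s v) \<le> \<sigma> * norm w"
    using norm_mult_le_mat_norm2[of M' w] mult_right_mono[OF M'(2) norm_ge_zero[of w]] by simp
  then have "(norm (M *v v - t *s v))\<^sup>2 \<le> (\<sigma> * norm w)\<^sup>2"
    by (rule power_mono) simp
  then have "(norm (M *v v - t *s v))\<^sup>2 \<le> S * (norm w)\<^sup>2"
    by (simp add: S_def power_mult_distrib)
  moreover have "(norm (M *v v - t *s v))\<^sup>2 = S * V - 2 * Re (cnj t * c) + (cmod t)\<^sup>2 * V"
    and "(norm w)\<^sup>2 = V - 2 * Re (cnj t * c) + (cmod t)\<^sup>2 * (S * V)"
  proof -
    have "(norm (M *v v))\<^sup>2 = S * V"
      using norm_sq_if_gram_eigenvector[OF v] by (simp add: S_def V_def)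
    moreover have "cnj (cnj t) * cinner v (M *v v) = cnj (cnj t * c)"
      by (simp add: c_def cinner_commute[of v])
    then have "Re (cnj (cnj t) * cinner v (M *v v)) = Re (cnj t * c)"
      by (simp only:) simp
    ultimately show "(norm (M *v v - t *s v))\<^sup>2 = S * V - 2 * Re (cnj t * c) + (cmod t)\<^sup>2 * V"
      and "(norm w)\<^sup>2 = V - 2 * Re (cnj t * c) + (cmod t)\<^sup>2 * (S * V)"
      unfolding w_def norm_diff_scale_sq complex_mod_cnj by (simp_all only: c_def V_def)
  qed
  ultimately have "S * V - 2 * Re (cnj t * c) + (cmod t)\<^sup>2 * V
      \<le> S * (V - 2 * Re (cnj t * c) + (cmod t)\<^sup>2 * (S * V))"
    by simp
  then have "(S - 1) * (2 * Re (cnj t * c)) \<le> (S - 1) * ((cmod t)\<^sup>2 * (V * (S + 1)))"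
    by (simp add: algebra_simps power2_eq_square)
  moreover have "S > 1"
    using \<open>\<sigma> > 1\<close> by (simp add: S_def)
  ultimately show ?thesis
    by (simp add: c_def V_def S_def)
qed

lemma cinner_eq_0_if_moebius_bounded:
  fixes M :: "complex^'n^'n"
  assumes v: "(cnj_transpose M ** M) *v v = complex_of_real (\<sigma>\<^sup>2) *s v" and "\<sigma> > 1"
    and moebius: "\<And>t. cmod t < 1 \<Longrightarrow> \<exists>M'. M' ** (mat 1 - mat (cnj t) ** M) = M - mat t \<and> mat_norm2 M' \<le> \<sigma>"
  shows "cinner (M *v v) v = 0"
proof -
  define c K where "c = cinner (M *v v) v" and "K = (norm v)\<^sup>2 * (\<sigma>\<^sup>2 + 1)"
  have pos: "0 < cmod c + 1"
    by (simp add: add_nonneg_pos)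
  have "2 * (cmod c)\<^sup>2 \<le> 0"
  proof (rule nonpos_if_linear_le_quadratic[of "1 / (cmod c + 1)"])
    fix s :: real
    assume "0 < s" "s < 1 / (cmod c + 1)"
    with pos have "s * (cmod c + 1) < 1"
      by (simp add: field_simps)
    then have "cmod (of_real s * c) < 1"
      using \<open>0 < s\<close> by (simp add: norm_mult distrib_left)
    then obtain M' where "M' ** (mat 1 - mat (cnj (of_real s * c)) ** M) = M - mat (of_real s * c)"
      "mat_norm2 M' \<le> \<sigma>"
      using moebius by blast
    from moebius_perturbation_inequality[OF v \<open>\<sigma> > 1\<close> this]
    have "2 * Re (of_real s * (cnj c * c)) \<le> (cmod (of_real s * c))\<^sup>2 * K"
      by (simp add: c_def K_def mult.assoc)
    then show "s * (2 * (cmod c)\<^sup>2) \<le> s\<^sup>2 * ((cmod c)\<^sup>2 * K)"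
      using \<open>0 < s\<close> by (simp add: norm_mult power_mult_distrib mult.commute[of "cnj c"]
          flip: complex_norm_square)
  qed (use pos in simp)
  then show ?thesis
    by (simp add: c_def)
qed

theorem theorem2:
  fixes Psi :: "complex^'n^'n" and \<theta> :: real and as :: "complex list" and v1 :: "complex^'n"
  assumes spec: "\<forall>l\<in>mat_spectrum Psi. cmod l < 1"
    and B_param: "blaschke_params (CARD('n) - 1) as"
    and B_max: "\<And>\<theta>' as'. blaschke_params (CARD('n) - 1) as' \<Longrightarrow>
                 mat_norm2 (blaschke_mat \<theta>' as' Psi) \<le> mat_norm2 (blaschke_mat \<theta> as Psi)"
    and B_gt1: "mat_norm2 (blaschke_mat \<theta> as Psi) > 1"
    and v1: "right_singular_vector (blaschke_mat \<theta> as Psi)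
               (largest_singular_value (blaschke_mat \<theta> as Psi)) v1"
  shows "cinner (blaschke_mat \<theta> as Psi *v v1) v1 = 0"
proof -
  define M where "M = blaschke_mat \<theta> as Psi"
  define \<sigma> where "\<sigma> = largest_singular_value M"
  have gram: "(cnj_transpose M ** M) *v v1 = complex_of_real (\<sigma>\<^sup>2) *s v1"
    using v1 by (simp add: right_singular_vector_def M_def \<sigma>_def)
  have norm_M: "mat_norm2 M \<le> \<sigma>"
    unfolding \<sigma>_def by (rule mat_norm2_le_largest_singular_value)
  with B_gt1 have "\<sigma> > 1"
    by (simp add: M_def)
  moreover have "\<exists>M'. M' ** (mat 1 - mat (cnj t) ** M) = M - mat t \<and> mat_norm2 M' \<le> \<sigma>"
    if t: "cmod t < 1" for t
  proof -
    obtain \<theta>' bs where "blaschke_params (CARD('n) - 1) bs"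
      and "blaschke_mat \<theta>' bs Psi ** (mat 1 - mat (cnj t) ** M) = M - mat t"
      using blaschke_mat_moebius[OF spec B_param t] unfolding M_def by blast
    with B_max[of bs \<theta>'] norm_M show ?thesis
      unfolding M_def by force
  qed
  ultimately show ?thesis
    using cinner_eq_0_if_moebius_bounded[OF gram] by (simp add: M_def)
qed

end
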